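(* Suppose $l$ is $(M,m)$-(restricted smooth, restricted strongly concave) on $\Omega_{2k}$. Then for all subsets $\mathsf{S},\mathsf{T}\subseteq[n]$ of size at most $k$, $$2M\sum_{j\in\mathsf{T}}f_{\mathsf{S}}(j)\ \ge\ \|\nabla l(\boldsymbol\beta^{(\mathsf{S})})_{\mathsf{T}}\|_2^2\ \ge\ 2m\sum_{j\in\mathsf{T}}f_{\mathsf{S}}(j).$$
   Context: $\Omega_r=\{(\mathbf{x},\mathbf{y})\in\mathbb{R}^n\times\mathbb{R}^n:\|\mathbf{x}\|_0\le r,\|\mathbf{y}\|_0\le r,\|\mathbf{x}-\mathbf{y}\|_0\le r\}$. A differentiable $l:\mathbb{R}^n\to\mathbb{R}$ is $(M,m)$-(restricted smooth, restricted strongly concave) on $\Omega_r$ if for all $(\mathbf{x},\mathbf{y})\in\Omega_r$: $-\tfrac{m}{2}\|\mathbf{y}-\mathbf{x}\|_2^2\ge l(\mathbf{y})-l(\mathbf{x})-\langle\nabla l(\mathbf{x}),\mathbf{y}-\mathbf{x}\rangle\ge -\tfrac{M}{2}\|\mathbf{y}-\mathbf{x}\|_2^2$, with $m,M>0$. For $\mathsf{S}\subseteq[n]$, $\boldsymbol\beta^{(\mathsf{S})}$ is a maximizer of $l$ over vectors supported in $\mathsf{S}$, $f(\mathsf{S})=l(\boldsymbol\beta^{(\mathsf{S})})-l(\mathbf{0})$, and $f_{\mathsf{S}}(j)=f(\mathsf{S}\cup\{j\})-f(\mathsf{S})$. $\mathbf{e}_j$ is the $j$-th unit vector and $\|\nabla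 l(\boldsymbol\beta)_{\mathsf{T}}\|_2^2=\sum_{j\in\mathsf{T}}\langle\nabla l(\boldsymbol\beta),\mathbf{e}_j\rangle^2$. *)

theory Defs
  imports "HOL-Analysis.Analysis"
begin

text \<open>Vectors in R^n are modelled as real^'n for a finite index type 'n (n = CARD('n)).\<close>

definition l0norm :: "real^'n \<Rightarrow> nat" where
  "l0norm x = card {i. x $ i \<noteq> 0}"

definition Omega :: "nat \<Rightarrow> ((real^'n) \<times> (real^'n)) set" where
  "Omega r = {(x, y). l0norm x \<le> r \<and> l0norm y \<le> r \<and> l0norm (x - y) \<le> r}"

definition rsm_rsc ::
  "(real^'n \<Rightarrow> real) \<Rightarrow> (real^'n \<Rightarrow> real^'n) \<Rightarrow> real \<Rightarrow> real \<Rightarrow> nat \<Rightarrow> bool" where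
  "rsm_rsc l grad M m r \<longleftrightarrow> M > 0 \<and> m > 0 \<and>
     (\<forall>(x, y) \<in> Omega r.
        - m / 2 * (norm (y - x))^2 \<ge> l y - l x - grad x \<bullet> (y - x) \<and>
        l y - l x - grad x \<bullet> (y - x) \<ge> - M / 2 * (norm (y - x))^2)"

definition supported_in :: "real^'n \<Rightarrow> 'n set \<Rightarrow> bool" where
  "supported_in x S \<longleftrightarrow> (\<forall>i. i \<notin> S \<longrightarrow> x $ i = 0)"

definition betaS :: "(real^'n \<Rightarrow> real) \<Rightarrow> 'n set \<Rightarrow> real^'n" where
  "betaS l S = (SOME b. supported_in b S \<and> (\<forall>y. supported_in y S \<longrightarrow> l y \<le> l b))"

definition fS :: "(real^'n \<Rightarrow> real) \<Rightarrow> 'n set \<Rightarrow> real" where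
  "fS l S = l (betaS l S) - l 0"

definition marg :: "(real^'n \<Rightarrow> real) \<Rightarrow> 'n set \<Rightarrow> 'n \<Rightarrow> real" where
  "marg l S j = fS l (insert j S) - fS l S"

end

theory Submission
  imports Defs
begin

text \<open>Let \<open>b = \<beta>(S)\<close>, \<open>g = \<nabla>l(b)\<close> and \<open>A = S \<union> {j}\<close>; all vectors involved are supported in
  \<open>A\<close>, of size at most \<open>2k\<close>. By restricted smoothness the coordinate step \<open>b + (g\<^sub>j/M) e\<^sub>j\<close>
  gains at least \<open>g\<^sub>j\<^sup>2/(2M)\<close>; hence \<open>g\<close> vanishes on \<open>S\<close> (optimality of \<open>b\<close>) and
  \<open>f\<^sub>S(j) \<ge> g\<^sub>j\<^sup>2/(2M)\<close>. With \<open>d = \<beta>(A) - b\<close>, restricted strong concavity and \<open>g = 0\<close> on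
  \<open>A - {j}\<close> give \<open>f\<^sub>S(j) \<le> g\<^sub>j d\<^sub>j - m d\<^sub>j\<^sup>2/2 \<le> g\<^sub>j\<^sup>2/(2m)\<close>.
  The maximizers exist because strong concavity makes \<open>{y supported in A. l y \<ge> l 0}\<close> compact.\<close>

lemma supported_in_diff: "supported_in x A \<Longrightarrow> supported_in y A \<Longrightarrow> supported_in (x - y) A"
  unfolding supported_in_def by auto

lemma supported_in_add: "supported_in x A \<Longrightarrow> supported_in y A \<Longrightarrow> supported_in (x + y) A"
  unfolding supported_in_def by auto

lemma supported_in_axis: "j \<in> A \<Longrightarrow> supported_in (axis j t) A"
  unfolding supported_in_def axis_def by auto

lemma supported_in_mono: "supported_in x A \<Longrightarrow> A \<subseteq> B \<Longrightarrow> supported_in x B"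
  unfolding supported_in_def by auto

lemma supported_in_zero [simp]: "supported_in 0 A"
  unfolding supported_in_def by auto

lemma inner_supported_in:
  assumes "supported_in d A"
  shows "g \<bullet> d = (\<Sum>i\<in>A. g $ i * d $ i)"
proof -
  have "(\<Sum>i\<in>UNIV. g $ i * d $ i) = (\<Sum>i\<in>A. g $ i * d $ i)"
    using assms unfolding supported_in_def by (intro sum.mono_neutral_right) auto
  then show ?thesis by (simp add: inner_vec_def)
qed

lemma l0norm_le_card: "supported_in x A \<Longrightarrow> l0norm x \<le> card A"
  unfolding l0norm_def supported_in_def
  by (intro card_mono) (auto intro: finite_subset)

lemma supported_in_Omega:
  "supported_in x A \<Longrightarrow> supported_in y A \<Longrightarrow> card A \<le> r \<Longrightarrow> (x, y) \<in> Omega r"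
  unfolding Omega_def
  using l0norm_le_card[of x A] l0norm_le_card[of y A] l0norm_le_card[of "x - y" A]
    supported_in_diff[of x A y]
  by auto

lemma rsm_rsc_pos: "rsm_rsc l grad M m r \<Longrightarrow> M > 0 \<and> m > 0"
  unfolding rsm_rsc_def by auto

lemma rsm_rsc_concave:
  "rsm_rsc l grad M m r \<Longrightarrow> (x, y) \<in> Omega r \<Longrightarrow>
    l y - l x - grad x \<bullet> (y - x) \<le> - m / 2 * (norm (y - x))^2"
  unfolding rsm_rsc_def by auto

lemma rsm_rsc_smooth:
  "rsm_rsc l grad M m r \<Longrightarrow> (x, y) \<in> Omega r \<Longrightarrow>
    l y - l x - grad x \<bullet> (y - x) \<ge> - M / 2 * (norm (y - x))^2"
  unfolding rsm_rsc_def by auto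

lemma norm_axis_power2: "(norm (axis j t :: real^'n))^2 = t^2"
  by (subst power2_norm_eq_inner) (simp add: inner_axis_axis power2_eq_square)

lemma rsm_rsc_superlevel_bounded:
  assumes reg: "rsm_rsc l grad M m r" and A: "card A \<le> r"
    and y: "supported_in y A" and ly: "l 0 \<le> l y"
  shows "norm y \<le> 2 * norm (grad 0) / m"
proof -
  have m: "m > 0" using rsm_rsc_pos[OF reg] by simp
  have "l y - l 0 - grad 0 \<bullet> y \<le> - m / 2 * (norm y)^2"
    using rsm_rsc_concave[OF reg supported_in_Omega[OF supported_in_zero y A]] by simp
  moreover have "grad 0 \<bullet> y \<le> norm (grad 0) * norm y" by (rule norm_cauchy_schwarz)
  ultimately have "(m / 2 * norm y) * norm y \<le> norm (grad 0) * norm y"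
    using ly by (simp add: power2_eq_square algebra_simps)
  then have "norm y = 0 \<or> m / 2 * norm y \<le> norm (grad 0)"
    by (cases "norm y = 0") (simp_all add: mult_le_cancel_right)
  then show ?thesis using m by (auto simp: field_simps)
qed

lemma betaS_maximizer:
  assumes reg: "rsm_rsc l grad M m r" and cont: "continuous_on UNIV l"
    and A: "card A \<le> r"
  shows "supported_in (betaS l A) A \<and> (\<forall>y. supported_in y A \<longrightarrow> l y \<le> l (betaS l A))"
proof -
  define K where "K = {y. (\<forall>i. i \<notin> A \<longrightarrow> y $ i = 0) \<and> l 0 \<le> l y}"
  have "closed K"
    unfolding K_def
    by (intro closed_Collect_conj closed_Collect_all closed_Collect_imp closed_Collect_eq
          closed_Collect_le continuous_intros cont) auto
  moreover have "bounded K"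
    using rsm_rsc_superlevel_bounded[OF reg A]
    unfolding bounded_iff K_def supported_in_def by blast
  moreover have "0 \<in> K" unfolding K_def by auto
  ultimately obtain b where b: "b \<in> K" "\<forall>y\<in>K. l y \<le> l b"
    using continuous_attains_sup[of K l] continuous_on_subset[OF cont]
    by (auto simp: compact_eq_bounded_closed)
  have "l y \<le> l b" if "supported_in y A" for y
    using that b unfolding K_def supported_in_def by fastforce
  then have "supported_in b A \<and> (\<forall>y. supported_in y A \<longrightarrow> l y \<le> l b)"
    using b(1) unfolding K_def supported_in_def by simp
  then show ?thesis unfolding betaS_def by (rule someI)
qed

text \<open>The step length \<open>g\<^sub>j/M\<close> maximizes the quadratic lower bound \<open>g\<^sub>j t - M t\<^sup>2/2\<close>.\<close>

lemma rsm_rsc_coordinate_step: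
  assumes reg: "rsm_rsc l grad M m r" and x: "supported_in x A"
    and A: "card A \<le> r" and j: "j \<in> A"
  shows "l x + (grad x $ j)^2 / (2 * M) \<le> l (x + axis j (grad x $ j / M))"
proof -
  have M: "M > 0" using rsm_rsc_pos[OF reg] by simp
  define t where "t = grad x $ j / M"
  have "supported_in (x + axis j t) A"
    by (intro supported_in_add x supported_in_axis j)
  from rsm_rsc_smooth[OF reg supported_in_Omega[OF x this A]]
  have "l (x + axis j t) - l x - grad x $ j * t \<ge> - M / 2 * t^2"
    by (simp add: norm_axis_power2 inner_axis)
  then show ?thesis
    unfolding t_def using M by (simp add: power2_eq_square field_simps)
qed

lemma maximizer_grad_vanishes:
  assumes reg: "rsm_rsc l grad M m r" and b: "supported_in b A"
    and max: "\<forall>y. supported_in y A \<longrightarrow> l y \<le> l b"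
    and A: "card A \<le> r" and i: "i \<in> A"
  shows "grad b $ i = 0"
proof -
  have M: "M > 0" using rsm_rsc_pos[OF reg] by simp
  have "supported_in (b + axis i (grad b $ i / M)) A"
    by (intro supported_in_add b supported_in_axis i)
  then have "(grad b $ i)^2 / (2 * M) \<le> 0"
    using rsm_rsc_coordinate_step[OF reg b A i] max by fastforce
  then show ?thesis using M by (simp add: divide_le_0_iff)
qed

lemma rsm_rsc_gain_le:
  assumes reg: "rsm_rsc l grad M m r" and x: "supported_in x A" and y: "supported_in y A"
    and A: "card A \<le> r" and j: "j \<in> A" and vanish: "\<And>i. i \<in> A - {j} \<Longrightarrow> grad x $ i = 0"
  shows "l y - l x \<le> (grad x $ j)^2 / (2 * m)"
proof -
  have m: "m > 0" using rsm_rsc_pos[OF reg] by simp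
  define d where "d = y - x"
  have d: "supported_in d A" unfolding d_def by (rule supported_in_diff[OF y x])
  have "grad x \<bullet> d = (\<Sum>i\<in>A. grad x $ i * d $ i)" by (rule inner_supported_in[OF d])
  also have "\<dots> = grad x $ j * d $ j + (\<Sum>i\<in>A - {j}. grad x $ i * d $ i)"
    using j by (simp add: sum.remove)
  also have "(\<Sum>i\<in>A - {j}. grad x $ i * d $ i) = 0"
    using vanish by simp
  finally have gd: "grad x \<bullet> d = grad x $ j * d $ j" by simp
  have "(d $ j)^2 \<le> (norm d)^2"
    using component_le_norm_cart[of d j] abs_le_square_iff by fastforce
  then have "m / 2 * (d $ j)^2 \<le> m / 2 * (norm d)^2"
    using m by (intro mult_left_mono) auto
  moreover have "l y - l x - grad x \<bullet> d \<le> - m / 2 * (norm d)^2"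
    using rsm_rsc_concave[OF reg supported_in_Omega[OF x y A]] unfolding d_def .
  ultimately have "l y - l x \<le> grad x $ j * d $ j - m / 2 * (d $ j)^2"
    using gd by linarith
  also have "\<dots> \<le> (grad x $ j)^2 / (2 * m)"
    using m sum_power2_ge_zero[of "grad x $ j - m * d $ j" 0]
    by (simp add: power2_eq_square field_simps)
  finally show ?thesis .
qed

lemma marg_bounds:
  assumes reg: "rsm_rsc l grad M m r" and cont: "continuous_on UNIV l"
    and card: "card (insert j S) \<le> r"
  shows "(grad (betaS l S) $ j)^2 \<le> 2 * M * marg l S j
    \<and> 2 * m * marg l S j \<le> (grad (betaS l S) $ j)^2"
proof -
  have M: "M > 0" and m: "m > 0" using rsm_rsc_pos[OF reg] by auto
  define A where "A = insert j S"
  define b where "b = betaS l S"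
  define b' where "b' = betaS l A"
  have cS: "card S \<le> r" using le_trans[OF card_mono[OF finite subset_insertI] card] .
  obtain bS: "supported_in b S" and bmax: "\<forall>y. supported_in y S \<longrightarrow> l y \<le> l b"
    using betaS_maximizer[OF reg cont cS] unfolding b_def by blast
  obtain b'A: "supported_in b' A" and b'max: "\<forall>y. supported_in y A \<longrightarrow> l y \<le> l b'"
    using betaS_maximizer[OF reg cont card] unfolding b'_def A_def by blast
  have bA: "supported_in b A" using bS unfolding A_def by (rule supported_in_mono) auto
  have cA: "card A \<le> r" and jA: "j \<in> A" using card unfolding A_def by auto
  have marg: "marg l S j = l b' - l b"
    unfolding marg_def fS_def b'_def b_def A_def by simp
  have "supported_in (b + axis j (grad b $ j / M)) A"
    by (intro supported_in_add bA supported_in_axis jA)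
  then have "l b + (grad b $ j)^2 / (2 * M) \<le> l b'"
    using rsm_rsc_coordinate_step[OF reg bA cA jA] b'max by fastforce
  then have upper: "(grad b $ j)^2 \<le> 2 * M * marg l S j"
    using M unfolding marg by (simp add: field_simps)
  have "\<And>i. i \<in> A - {j} \<Longrightarrow> grad b $ i = 0"
    using maximizer_grad_vanishes[OF reg bS bmax cS] unfolding A_def by blast
  from rsm_rsc_gain_le[OF reg bA b'A cA jA this]
  have lower: "2 * m * marg l S j \<le> (grad b $ j)^2"
    using m unfolding marg by (simp add: field_simps)
  show ?thesis using upper lower unfolding b_def by simp
qed

theorem mainTheorem3:
  fixes l :: "real^'n \<Rightarrow> real" and grad :: "real^'n \<Rightarrow> real^'n"
    and M m :: real and k :: nat and S T :: "'n set"
  assumes grad: "\<And>x. (l has_derivative (\<lambda>h. grad x \<bullet> h)) (at x)"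
    and reg: "rsm_rsc l grad M m (2 * k)"
    and S: "card S \<le> k" and T: "card T \<le> k"
  shows "2 * M * (\<Sum>j\<in>T. marg l S j) \<ge> (\<Sum>j\<in>T. (grad (betaS l S) \<bullet> axis j 1)^2)
       \<and> (\<Sum>j\<in>T. (grad (betaS l S) \<bullet> axis j 1)^2) \<ge> 2 * m * (\<Sum>j\<in>T. marg l S j)"
proof -
  have cont: "continuous_on UNIV l"
    by (intro continuous_at_imp_continuous_on ballI has_derivative_continuous[OF grad])
  have "(grad (betaS l S) $ j)^2 \<le> 2 * M * marg l S j
      \<and> 2 * m * marg l S j \<le> (grad (betaS l S) $ j)^2" if "j \<in> T" for j
  proof -
    have "card T > 0" using that by (auto simp: card_gt_0_iff)
    then have "k \<ge> 1" using T by linarith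
    moreover have "card (insert j S) \<le> Suc (card S)" by (simp add: card_insert_if)
    ultimately have "card (insert j S) \<le> 2 * k" using S by linarith
    then show ?thesis by (rule marg_bounds[OF reg cont])
  qed
  then have "(\<Sum>j\<in>T. (grad (betaS l S) $ j)^2) \<le> (\<Sum>j\<in>T. 2 * M * marg l S j)"
    and "(\<Sum>j\<in>T. 2 * m * marg l S j) \<le> (\<Sum>j\<in>T. (grad (betaS l S) $ j)^2)"
    by (auto intro: sum_mono)
  then show ?thesis by (simp add: inner_axis sum_distrib_left)
qed

end
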